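(* Let $M$ be a finite-dimensional $C^*$-algebra, $\Delta:M\to M\otimes M$ an injective (not necessarily unital) $*$-homomorphism with $(\Delta\otimes\mathrm{id})\circ\Delta=(\mathrm{id}\otimes\Delta)\circ\Delta$, and $S:M\to M$ a linear, unital, antimultiplicative, $*$-preserving bijection with $S^2=\mathrm{id}$ and $(S\otimes S)\circ\Delta=\varsigma\circ\Delta\circ S$. Let $\varepsilon:M\to\mathbb{C}$ be a linear map with $(\varepsilon\otimes\mathrm{id})\Delta=(\mathrm{id}\otimes\varepsilon)\Delta=\mathrm{id}$, $\varepsilon(S(x))=\varepsilon(x)$ and $\varepsilon(x^* )=\overline{\varepsilon(x)}$ for all $x\in M$. Put $e=\Delta(1)$ and $\varepsilon_s=\mu(S\otimes\mathrm{id})\Delta$. Then the following two sets of conditions are equivalent: (I) (2) $(\varepsilon\otimes\varepsilon)((x\otimes 1)e(1\otimes y))=\varepsilon(xy)$ for all $x,y\in M$, and (3) $(\varepsilon_s\otimes\mathrm{id})\Delta(x)=(1\otimes x)e$ for all $x\in M$; (II) (A2) $(\varepsilon\otimes\mathrm{id})((x\otimes 1)e(1\otimes y))=(\varepsilon\otimes\mathrm{id})((x\otimes 1)\Delta(y))$ for all $x,y\in M$; (A3) $(\mathrm{id}\otimes\varepsilon\otimes\mathrm{id})[(e\otimes 1)(1\otimes\Delta(x))]=e(1\otimes x)$ for all $x\in M$; (A4) $\varepsilon_s(x)=(\mathrm{id}\otimes\varepsilon)((1\otimes x)e)$ for all $x\in M$.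
   Context: All algebras are finite-dimensional over $\mathbb{C}$. $\varsigma:M\otimes M\to M\otimes M$ is the flip $x\otimes y\mapsto y\otimes x$, and $\mu:M\otimes M\to M$ is the linear map induced by multiplication, $\mu(x\otimes y)=xy$. *)

theory Defs
  imports "HOL-Analysis.Analysis"
begin

text \<open>
  A finite-dimensional complex vector space is modelled (up to linear isomorphism)
  as the coordinate space complex^'i with 'i a finite index type.
  Consequently the algebraic tensor product M (x) M is complex^('i \<times> 'i)
  and M (x) M (x) M is complex^('i \<times> 'i \<times> 'i), with the usual
  elementary tensors.
\<close>

type_synonym 'i alg = "complex^'i"
type_synonym 'i alg2 = "complex^('i \<times> 'i)"
type_synonym 'i alg3 = "complex^('i \<times> 'i \<times> 'i)"

definition bas :: "'i::finite \<Rightarrow> 'i alg" where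
  "bas i = axis i 1"

definition clinear :: "(complex^'a \<Rightarrow> complex^'b) \<Rightarrow> bool" where
  "clinear f \<longleftrightarrow> (\<forall>x y. f (x + y) = f x + f y) \<and> (\<forall>c x. f (c *s x) = c *s f x)"

definition cfunctional :: "(complex^'a \<Rightarrow> complex) \<Rightarrow> bool" where
  "cfunctional f \<longleftrightarrow> (\<forall>x y. f (x + y) = f x + f y) \<and> (\<forall>c x. f (c *s x) = c * f x)"

text \<open>Finite-dimensional C*-algebra structure on complex^'i given by multiplication,
  unit and involution: a unital complex *-algebra admitting a C*-norm
  (completeness is automatic in finite dimension).\<close>
definition fd_cstar :: "('i::finite alg \<Rightarrow> 'i alg \<Rightarrow> 'i alg) \<Rightarrow> 'i alg \<Rightarrow> ('i alg \<Rightarrow> 'i alg) \<Rightarrow> bool" where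
  "fd_cstar mul one st \<longleftrightarrow>
     (\<forall>x y z. mul (mul x y) z = mul x (mul y z)) \<and>
     (\<forall>x y z. mul (x + y) z = mul x z + mul y z) \<and>
     (\<forall>x y z. mul x (y + z) = mul x y + mul x z) \<and>
     (\<forall>c x y. mul (c *s x) y = c *s mul x y) \<and>
     (\<forall>c x y. mul x (c *s y) = c *s mul x y) \<and>
     (\<forall>x. mul one x = x \<and> mul x one = x) \<and>
     (\<forall>x y. st (x + y) = st x + st y) \<and>
     (\<forall>c x. st (c *s x) = cnj c *s st x) \<and>
     (\<forall>x. st (st x) = x) \<and>
     (\<forall>x y. st (mul x y) = mul (st y) (st x)) \<and>
     (\<exists>N :: 'i alg \<Rightarrow> real.
        (\<forall>x. N x = 0 \<longleftrightarrow> x = 0) \<and>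
        (\<forall>x y. N (x + y) \<le> N x + N y) \<and>
        (\<forall>c x. N (c *s x) = cmod c * N x) \<and>
        (\<forall>x y. N (mul x y) \<le> N x * N y) \<and>
        (\<forall>x. N (mul (st x) x) = (N x)\<^sup>2))"

definition tens :: "'i::finite alg \<Rightarrow> 'i alg \<Rightarrow> 'i alg2" where
  "tens x y = (\<chi> p. x $ fst p * y $ snd p)"

definition tens21 :: "'i::finite alg2 \<Rightarrow> 'i alg \<Rightarrow> 'i alg3" where
  "tens21 T y = (\<chi> p. T $ (fst p, fst (snd p)) * y $ snd (snd p))"

definition tens12 :: "'i::finite alg \<Rightarrow> 'i alg2 \<Rightarrow> 'i alg3" where
  "tens12 x T = (\<chi> p. x $ fst p * T $ snd p)"

definition tmult :: "('i::finite alg \<Rightarrow> 'i alg \<Rightarrow> 'i alg) \<Rightarrow> 'i alg2 \<Rightarrow> 'i alg2 \<Rightarrow> 'i alg2" where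
  "tmult mul T U = (\<Sum>p\<in>UNIV. \<Sum>q\<in>UNIV. (T $ p * U $ q) *s
        tens (mul (bas (fst p)) (bas (fst q))) (mul (bas (snd p)) (bas (snd q))))"

definition tstar :: "('i::finite alg \<Rightarrow> 'i alg) \<Rightarrow> 'i alg2 \<Rightarrow> 'i alg2" where
  "tstar st T = (\<Sum>p\<in>UNIV. cnj (T $ p) *s tens (st (bas (fst p))) (st (bas (snd p))))"

definition tmult3 :: "('i::finite alg \<Rightarrow> 'i alg \<Rightarrow> 'i alg) \<Rightarrow> 'i alg3 \<Rightarrow> 'i alg3 \<Rightarrow> 'i alg3" where
  "tmult3 mul T U = (\<Sum>p\<in>UNIV. \<Sum>q\<in>UNIV. (T $ p * U $ q) *s
        tens12 (mul (bas (fst p)) (bas (fst q)))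
          (tens (mul (bas (fst (snd p))) (bas (fst (snd q))))
                (mul (bas (snd (snd p))) (bas (snd (snd q))))))"

definition tmap :: "('i::finite alg \<Rightarrow> 'i alg) \<Rightarrow> ('i alg \<Rightarrow> 'i alg) \<Rightarrow> 'i alg2 \<Rightarrow> 'i alg2" where
  "tmap f g T = (\<Sum>p\<in>UNIV. T $ p *s tens (f (bas (fst p))) (g (bas (snd p))))"

definition fun_id :: "('i::finite alg \<Rightarrow> complex) \<Rightarrow> 'i alg2 \<Rightarrow> 'i alg" where
  "fun_id \<phi> T = (\<Sum>p\<in>UNIV. (T $ p * \<phi> (bas (fst p))) *s bas (snd p))"

definition id_fun :: "('i::finite alg \<Rightarrow> complex) \<Rightarrow> 'i alg2 \<Rightarrow> 'i alg" where
  "id_fun \<phi> T = (\<Sum>p\<in>UNIV. (T $ p * \<phi> (bas (snd p))) *s bas (fst p))"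

definition fun_fun :: "('i::finite alg \<Rightarrow> complex) \<Rightarrow> ('i alg \<Rightarrow> complex) \<Rightarrow> 'i alg2 \<Rightarrow> complex" where
  "fun_fun \<phi> \<psi> T = (\<Sum>p\<in>UNIV. T $ p * \<phi> (bas (fst p)) * \<psi> (bas (snd p)))"

definition id_fun_id :: "('i::finite alg \<Rightarrow> complex) \<Rightarrow> 'i alg3 \<Rightarrow> 'i alg2" where
  "id_fun_id \<phi> T = (\<Sum>p\<in>UNIV. (T $ p * \<phi> (bas (fst (snd p)))) *s
                        tens (bas (fst p)) (bas (snd (snd p))))"

definition map_id :: "('i::finite alg \<Rightarrow> 'i alg2) \<Rightarrow> 'i alg2 \<Rightarrow> 'i alg3" where
  "map_id D T = (\<Sum>p\<in>UNIV. T $ p *s tens21 (D (bas (fst p))) (bas (snd p)))"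

definition id_map :: "('i::finite alg \<Rightarrow> 'i alg2) \<Rightarrow> 'i alg2 \<Rightarrow> 'i alg3" where
  "id_map D T = (\<Sum>p\<in>UNIV. T $ p *s tens12 (bas (fst p)) (D (bas (snd p))))"

definition tflip :: "'i::finite alg2 \<Rightarrow> 'i alg2" where
  "tflip T = (\<chi> p. T $ (snd p, fst p))"

definition tmu :: "('i::finite alg \<Rightarrow> 'i alg \<Rightarrow> 'i alg) \<Rightarrow> 'i alg2 \<Rightarrow> 'i alg" where
  "tmu mul T = (\<Sum>p\<in>UNIV. T $ p *s mul (bas (fst p)) (bas (snd p)))"

end

theory Submission
  imports Defs
begin

(*
  Put G y = (id (x) eps)(e (1 (x) y)) and H y = (id (x) eps)((1 (x) y) e)
  (slice_e_mult_right and slice_e_mult_left below).  Since e = Delta 1 is self-adjoint and eps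
  commutes with the involution, H = * o G o *.  The left-hand side of (A3) is (G (x) id)(Delta x),
  so taking adjoints shows that (A3) is condition (3) with H in place of eps_s; and applying
  id (x) eps to (3), together with the counit law, forces eps_s = H, i.e. (A4).  Hence
  (3) <-> (A3) /\ (A4).  Under (A3), (2) and (A2) are equivalent: (2) is (A2) followed by eps and
  the counit law; conversely, rewrite e (1 (x) y) by (A3) as (id (x) L_y) e with
  L_y z = (eps (x) id)((z (x) 1) Delta y) and slice with eps(x .) (x) id, where (2) says that
  P = (eps (x) id)((x (x) 1) e) satisfies eps(P .) = eps(x .).

  Besides the linearity of eps_s, only the right counit law and the compatibility of Delta and
  eps with the involutions are used; in particular the antipode plays no other role.
*)

section \<open>Semilinear maps between coordinate spaces\<close>

definition semilinear :: "(complex \<Rightarrow> complex) \<Rightarrow> (complex^'a \<Rightarrow> complex^'b) \<Rightarrow> bool" where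
  "semilinear h f \<longleftrightarrow> (\<forall>x y. f (x + y) = f x + f y) \<and> (\<forall>c x. f (c *s x) = h c *s f x)"

lemma clinear_iff_semilinear: "clinear f \<longleftrightarrow> semilinear (\<lambda>c. c) f"
  by (simp add: clinear_def semilinear_def)

lemma vector_smult_sum: "(c::'a::semiring_0) *s sum f A = (\<Sum>x\<in>A. c *s f x)"
  by (simp add: vec_eq_iff sum_distrib_left)

lemma semilinear_sum:
  assumes "semilinear h f" "finite A"
  shows "f (\<Sum>p\<in>A. c p *s v p) = (\<Sum>p\<in>A. h (c p) *s f (v p))"
  using assms(2)
proof (induction A rule: finite_induct)
  case empty
  have "f (0 + 0) = f 0 + f 0" using assms(1) unfolding semilinear_def by blast
  then show ?case by simp
next
  case (insert x F) then show ?case using assms(1) by (simp add: semilinear_def)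
qed

lemma cfunctional_sum:
  assumes "cfunctional f" "finite A"
  shows "f (\<Sum>p\<in>A. c p *s v p) = (\<Sum>p\<in>A. c p * f (v p))"
  using assms(2)
proof (induction A rule: finite_induct)
  case empty
  have "f (0 + 0) = f 0 + f 0" using assms(1) unfolding cfunctional_def by blast
  then show ?case by simp
next
  case (insert x F) then show ?case using assms(1) by (simp add: cfunctional_def)
qed

lemma semilinear_compose:
  "semilinear h f \<Longrightarrow> semilinear k g \<Longrightarrow> semilinear (\<lambda>c. h (k c)) (\<lambda>x. f (g x))"
  by (simp add: semilinear_def)

lemma semilinear_compose_clinear_left: "clinear f \<Longrightarrow> semilinear h g \<Longrightarrow> semilinear h (\<lambda>x. f (g x))"
  by (simp add: semilinear_def clinear_def)

lemma semilinear_compose_clinear_right: "semilinear h f \<Longrightarrow> clinear g \<Longrightarrow> semilinear h (\<lambda>x. f (g x))"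
  by (simp add: semilinear_def clinear_def)

lemma clinear_compose: "clinear f \<Longrightarrow> clinear g \<Longrightarrow> clinear (\<lambda>x. f (g x))"
  by (simp add: clinear_def)

lemma clinear_id: "clinear id"
  by (simp add: clinear_def)

lemma clinear_scale: "clinear f \<Longrightarrow> clinear (\<lambda>x. c *s f x)"
  by (simp add: clinear_def vector_add_ldistrib vector_smult_assoc mult.commute)

lemma clinear_cfunctional_scale: "cfunctional \<phi> \<Longrightarrow> clinear (\<lambda>x. \<phi> x *s v)"
  by (simp add: clinear_def cfunctional_def vector_sadd_rdistrib vector_smult_assoc)

lemma clinear_sum_scaled: "(\<And>q. clinear (f q)) \<Longrightarrow> clinear (\<lambda>x. \<Sum>q\<in>UNIV. c q *s f q x)"
  unfolding clinear_def
  by (simp add: vector_add_ldistrib sum.distrib vector_smult_sum vector_smult_assoc mult.commute)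

lemma clinear_coord_sum: "clinear (\<lambda>T. \<Sum>p\<in>UNIV. T$p *s V p)"
  by (simp add: clinear_def vector_sadd_rdistrib sum.distrib vector_smult_sum vector_smult_assoc)

lemma semilinear_cnj_coord_sum: "semilinear cnj (\<lambda>T. \<Sum>p\<in>UNIV. cnj (T$p) *s V p)"
  by (simp add: semilinear_def vector_sadd_rdistrib sum.distrib vector_smult_sum vector_smult_assoc)

lemma sum_UNIV_pairs:
  "(\<Sum>p\<in>(UNIV::('a::finite \<times> 'b::finite) set). f p) = (\<Sum>i\<in>UNIV. \<Sum>j\<in>UNIV. f (i, j))"
  unfolding sum.cartesian_product UNIV_Times_UNIV by simp

lemma bas_expansion: "(\<Sum>i\<in>UNIV. x$i *s bas i) = (x::'i::finite alg)"
  by (simp add: bas_def basis_expansion)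

lemma clinear_basis_expansion:
  assumes "clinear f"
  shows "f (x::'i::finite alg) = (\<Sum>i\<in>UNIV. x$i *s f (bas i))"
  using semilinear_sum[OF assms[unfolded clinear_iff_semilinear], of UNIV "\<lambda>i. x$i" bas]
  by (simp add: bas_expansion)

lemma bilinear_basis_expansion:
  assumes "\<And>y. clinear (\<lambda>x. F x y)" "\<And>x. clinear (\<lambda>y. F x y)"
  shows "(\<Sum>p\<in>UNIV. (a$fst p * b$snd p) *s F (bas (fst p)) (bas (snd p))) = F (a::'i::finite alg) (b::'i alg)"
proof -
  have "(\<Sum>p\<in>UNIV. (a$fst p * b$snd p) *s F (bas (fst p)) (bas (snd p)))
      = (\<Sum>i\<in>UNIV. a$i *s (\<Sum>j\<in>UNIV. b$j *s F (bas i) (bas j)))"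
    by (simp add: sum_UNIV_pairs vector_smult_sum vector_smult_assoc)
  also have "\<dots> = (\<Sum>i\<in>UNIV. a$i *s F (bas i) b)"
    using clinear_basis_expansion[OF assms(2), of _ b] by simp
  also have "\<dots> = F a b"
    using clinear_basis_expansion[OF assms(1)[of b], of a] by simp
  finally show ?thesis .
qed

lemma trilinear_basis_expansion:
  assumes "\<And>y z. clinear (\<lambda>x. F x y z)" "\<And>x z. clinear (\<lambda>y. F x y z)" "\<And>x y. clinear (\<lambda>z. F x y z)"
  shows "(\<Sum>p\<in>UNIV. (a$fst p * b$fst (snd p) * c$snd (snd p)) *s
            F (bas (fst p)) (bas (fst (snd p))) (bas (snd (snd p))))
     = F (a::'i::finite alg) (b::'i alg) (c::'i alg)"
proof -
  have "(\<Sum>p\<in>UNIV. (a$fst p * b$fst (snd p) * c$snd (snd p)) *s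
            F (bas (fst p)) (bas (fst (snd p))) (bas (snd (snd p))))
      = (\<Sum>i\<in>UNIV. a$i *s (\<Sum>q\<in>UNIV. (b$fst q * c$snd q) *s F (bas i) (bas (fst q)) (bas (snd q))))"
    by (simp add: sum_UNIV_pairs[of "\<lambda>p. _ p *s _ p"] vector_smult_sum vector_smult_assoc mult.assoc)
  also have "\<dots> = (\<Sum>i\<in>UNIV. a$i *s F (bas i) b c)"
    using bilinear_basis_expansion[of "F (bas _)" b c] assms(2,3) by simp
  also have "\<dots> = F a b c"
    using clinear_basis_expansion[OF assms(1)[of b c], of a] by simp
  finally show ?thesis .
qed

section \<open>Elementary tensors and slice maps\<close>

lemma clinear_tens_left: "clinear (\<lambda>x. tens x y)"
  unfolding clinear_def tens_def by (simp add: vec_eq_iff distrib_right)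

lemma clinear_tens_right: "clinear (\<lambda>y. tens x y)"
  unfolding clinear_def tens_def by (simp add: vec_eq_iff distrib_left)

lemma tens_scale_left: "tens (c *s x) y = c *s tens x y"
  using clinear_tens_left unfolding clinear_def by blast

lemma tens_scale_right: "tens x (c *s y) = c *s tens x y"
  using clinear_tens_right unfolding clinear_def by blast

lemma tens_bas: "tens (bas i) (bas j) = (axis (i, j) 1 :: 'i::finite alg2)"
  by (auto simp: vec_eq_iff tens_def bas_def axis_def)

lemma tens_basis_expansion: "(\<Sum>p\<in>UNIV. T$p *s tens (bas (fst p)) (bas (snd p))) = (T::'i::finite alg2)"
  by (simp add: tens_bas basis_expansion)

lemma tens_sum_sum:
  "tens (\<Sum>i\<in>(UNIV::'k::finite set). \<alpha> i *s u i) (\<Sum>j\<in>(UNIV::'l::finite set). \<beta> j *s v j)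
   = (\<Sum>p\<in>UNIV. (\<alpha> (fst p) * \<beta> (snd p)) *s tens (u (fst p)) (v (snd p)))"
proof -
  have "tens (\<Sum>i\<in>UNIV. \<alpha> i *s u i) (\<Sum>j\<in>UNIV. \<beta> j *s v j)
      = (\<Sum>i\<in>UNIV. \<alpha> i *s tens (u i) (\<Sum>j\<in>UNIV. \<beta> j *s v j))"
    by (simp add: semilinear_sum[OF clinear_tens_left[unfolded clinear_iff_semilinear]])
  also have "\<dots> = (\<Sum>i\<in>UNIV. \<alpha> i *s (\<Sum>j\<in>UNIV. \<beta> j *s tens (u i) (v j)))"
    by (simp add: semilinear_sum[OF clinear_tens_right[unfolded clinear_iff_semilinear]])
  finally show ?thesis
    by (simp add: sum_UNIV_pairs vector_smult_sum vector_smult_assoc)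
qed

lemma semilinear_eq_on_tens:
  assumes "semilinear h f" "semilinear h g" "\<And>a b. f (tens a b) = g (tens a b)"
  shows "f T = g (T::'i::finite alg2)"
proof -
  have "f (\<Sum>p\<in>UNIV. T$p *s tens (bas (fst p)) (bas (snd p)))
      = g (\<Sum>p\<in>UNIV. T$p *s tens (bas (fst p)) (bas (snd p)))"
    by (simp add: semilinear_sum[OF assms(1)] semilinear_sum[OF assms(2)] assms(3))
  then show ?thesis
    by (simp only: tens_basis_expansion)
qed

lemma clinear_eq_on_tens:
  "clinear f \<Longrightarrow> clinear g \<Longrightarrow> (\<And>a b. f (tens a b) = g (tens a b)) \<Longrightarrow> f T = g (T::'i::finite alg2)"
  by (rule semilinear_eq_on_tens) (simp_all add: clinear_iff_semilinear)

lemma clinear_tmap: "clinear (tmap f g)"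
  unfolding tmap_def by (rule clinear_coord_sum)

lemma tmap_tens:
  assumes "clinear f" "clinear g"
  shows "tmap f g (tens a b) = tens (f a) (g b)"
  unfolding tmap_def tens_def[of a b] vec_lambda_beta
  by (rule bilinear_basis_expansion[where F = "\<lambda>x y. tens (f x) (g y)"])
     (auto intro: clinear_compose clinear_tens_left clinear_tens_right assms)

lemma clinear_fun_id: "clinear (fun_id \<phi>)"
  unfolding fun_id_def vector_smult_assoc[symmetric] by (rule clinear_coord_sum)

lemma fun_id_tens:
  assumes "cfunctional \<phi>"
  shows "fun_id \<phi> (tens a b) = \<phi> a *s b"
proof -
  have "fun_id \<phi> (tens a b)
      = (\<Sum>p\<in>UNIV. (a$fst p * b$snd p) *s (\<lambda>x y. \<phi> x *s y) (bas (fst p)) (bas (snd p)))"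
    by (simp add: fun_id_def tens_def vector_smult_assoc mult_ac)
  also have "\<dots> = \<phi> a *s b"
    by (rule bilinear_basis_expansion)
       (auto intro: clinear_cfunctional_scale clinear_scale clinear_id[unfolded id_def] assms)
  finally show ?thesis .
qed

lemma clinear_id_fun: "clinear (id_fun \<phi>)"
  unfolding id_fun_def vector_smult_assoc[symmetric] by (rule clinear_coord_sum)

lemma id_fun_tens:
  assumes "cfunctional \<phi>"
  shows "id_fun \<phi> (tens a b) = \<phi> b *s a"
proof -
  have "id_fun \<phi> (tens a b)
      = (\<Sum>p\<in>UNIV. (a$fst p * b$snd p) *s (\<lambda>x y. \<phi> y *s x) (bas (fst p)) (bas (snd p)))"
    by (simp add: id_fun_def tens_def vector_smult_assoc mult_ac)
  also have "\<dots> = \<phi> b *s a"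
    by (rule bilinear_basis_expansion)
       (auto intro: clinear_cfunctional_scale clinear_scale clinear_id[unfolded id_def] assms)
  finally show ?thesis .
qed

lemma fun_fun_eq_fun_id:
  assumes "cfunctional \<psi>"
  shows "fun_fun \<phi> \<psi> T = \<psi> (fun_id \<phi> T)"
  unfolding fun_id_def fun_fun_def by (simp add: cfunctional_sum[OF assms] mult.assoc)

lemma fun_fun_eq_id_fun:
  assumes "cfunctional \<phi>"
  shows "fun_fun \<phi> \<psi> T = \<phi> (id_fun \<psi> T)"
  unfolding id_fun_def fun_fun_def by (simp add: cfunctional_sum[OF assms] mult_ac)

lemma id_fun_tmap_left:
  assumes "cfunctional \<phi>" "clinear f"
  shows "id_fun \<phi> (tmap f id T) = f (id_fun \<phi> T)"
  by (rule clinear_eq_on_tens[OF clinear_compose[OF clinear_id_fun clinear_tmap]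
        clinear_compose[OF assms(2) clinear_id_fun]])
     (use assms in \<open>simp add: tmap_tens id_fun_tens clinear_id clinear_def\<close>)

lemma fun_id_tmap_right:
  assumes "cfunctional \<phi>" "clinear g"
  shows "fun_id \<phi> (tmap id g T) = g (fun_id \<phi> T)"
  by (rule clinear_eq_on_tens[OF clinear_compose[OF clinear_fun_id clinear_tmap]
        clinear_compose[OF assms(2) clinear_fun_id]])
     (use assms in \<open>simp add: tmap_tens fun_id_tens clinear_id clinear_def\<close>)

lemma semilinear_tstar: "semilinear cnj (tstar st)"
  unfolding tstar_def by (rule semilinear_cnj_coord_sum)

lemma tstar_tens:
  assumes "semilinear cnj st"
  shows "tstar st (tens a b) = tens (st a) (st b)"
proof -
  have expand: "st x = (\<Sum>i\<in>UNIV. cnj (x$i) *s st (bas i))" for x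
    using semilinear_sum[OF assms, of UNIV "\<lambda>i. x$i" bas] by (simp add: bas_expansion)
  show ?thesis
    unfolding expand[of a] expand[of b] tens_sum_sum by (simp add: tstar_def tens_def)
qed

lemma clinear_tens21_left: "clinear (\<lambda>T. tens21 T y)"
  unfolding clinear_def tens21_def by (simp add: vec_eq_iff distrib_right)

lemma clinear_tens12_left: "clinear (\<lambda>x. tens12 x T)"
  unfolding clinear_def tens12_def by (simp add: vec_eq_iff distrib_right)

lemma clinear_tens12_right: "clinear (\<lambda>T. tens12 x T)"
  unfolding clinear_def tens12_def by (simp add: vec_eq_iff distrib_left)

lemma tens21_tens: "tens21 (tens a b) c = tens12 a (tens b c)"
  by (simp add: vec_eq_iff tens21_def tens12_def tens_def)

lemma tens12_tens_nth: "tens12 a (tens b c) $ p = a$fst p * b$fst (snd p) * c$snd (snd p)"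
  by (simp add: tens12_def tens_def mult.assoc)

lemma clinear_id_fun_id: "clinear (id_fun_id \<phi>)"
  unfolding id_fun_id_def vector_smult_assoc[symmetric] by (rule clinear_coord_sum)

lemma id_fun_id_tens:
  assumes "cfunctional \<phi>"
  shows "id_fun_id \<phi> (tens12 a (tens b c)) = \<phi> b *s tens a c"
proof -
  have "id_fun_id \<phi> (tens12 a (tens b c))
      = (\<Sum>p\<in>UNIV. (a$fst p * b$fst (snd p) * c$snd (snd p)) *s
          (\<lambda>x y z. \<phi> y *s tens x z) (bas (fst p)) (bas (fst (snd p))) (bas (snd (snd p))))"
    by (simp add: id_fun_id_def tens12_tens_nth vector_smult_assoc mult_ac)
  also have "\<dots> = \<phi> b *s tens a c"
    by (rule trilinear_basis_expansion)
       (auto intro: clinear_cfunctional_scale clinear_scale clinear_tens_left clinear_tens_right assms)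
  finally show ?thesis .
qed

lemma clinear_tmu: "clinear (tmu mul)"
  unfolding tmu_def by (rule clinear_coord_sum)

lemma tmult_sum_left:
  "tmult mul T U = (\<Sum>p\<in>UNIV. T$p *s (\<Sum>q\<in>UNIV. U$q *s
     tens (mul (bas (fst p)) (bas (fst q))) (mul (bas (snd p)) (bas (snd q)))))"
  by (simp add: tmult_def vector_smult_sum vector_smult_assoc)

lemma tmult_sum_right:
  "tmult mul T U = (\<Sum>q\<in>UNIV. U$q *s (\<Sum>p\<in>UNIV. T$p *s
     tens (mul (bas (fst p)) (bas (fst q))) (mul (bas (snd p)) (bas (snd q)))))"
  unfolding tmult_def vector_smult_sum vector_smult_assoc
  by (subst sum.swap) (simp add: mult.commute)

lemma clinear_tmult_left: "clinear (\<lambda>T. tmult mul T U)"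
  unfolding tmult_sum_left by (rule clinear_coord_sum)

lemma clinear_tmult_right: "clinear (\<lambda>U. tmult mul T U)"
  unfolding tmult_sum_right by (rule clinear_coord_sum)

lemma tmult3_sum_left:
  "tmult3 mul T U = (\<Sum>p\<in>UNIV. T$p *s (\<Sum>q\<in>UNIV. U$q *s
     tens12 (mul (bas (fst p)) (bas (fst q)))
       (tens (mul (bas (fst (snd p))) (bas (fst (snd q)))) (mul (bas (snd (snd p))) (bas (snd (snd q)))))))"
  by (simp add: tmult3_def vector_smult_sum vector_smult_assoc)

lemma tmult3_sum_right:
  "tmult3 mul T U = (\<Sum>q\<in>UNIV. U$q *s (\<Sum>p\<in>UNIV. T$p *s
     tens12 (mul (bas (fst p)) (bas (fst q)))
       (tens (mul (bas (fst (snd p))) (bas (fst (snd q)))) (mul (bas (snd (snd p))) (bas (snd (snd q)))))))"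
  unfolding tmult3_def vector_smult_sum vector_smult_assoc
  by (subst sum.swap) (simp add: mult.commute)

lemma clinear_tmult3_left: "clinear (\<lambda>T. tmult3 mul T U)"
  unfolding tmult3_sum_left by (rule clinear_coord_sum)

lemma clinear_tmult3_right: "clinear (\<lambda>U. tmult3 mul T U)"
  unfolding tmult3_sum_right by (rule clinear_coord_sum)

section \<open>Unital *-algebras\<close>

locale unital_star_algebra =
  fixes mul :: "'i::finite alg \<Rightarrow> 'i alg \<Rightarrow> 'i alg" and one :: "'i alg" and st :: "'i alg \<Rightarrow> 'i alg"
  assumes mul_add_left: "mul (x + y) z = mul x z + mul y z"
    and mul_add_right: "mul x (y + z) = mul x y + mul x z"
    and mul_scale_left: "mul (c *s x) y = c *s mul x y"
    and mul_scale_right: "mul x (c *s y) = c *s mul x y"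
    and mul_one_left [simp]: "mul one x = x"
    and mul_one_right [simp]: "mul x one = x"
    and star_add: "st (x + y) = st x + st y"
    and star_scale: "st (c *s x) = cnj c *s st x"
    and star_star [simp]: "st (st x) = x"
    and star_mul: "st (mul x y) = mul (st y) (st x)"

lemma fd_cstar_unital_star_algebra: "fd_cstar mul one st \<Longrightarrow> unital_star_algebra mul one st"
  by (unfold_locales) (simp_all add: fd_cstar_def)

context unital_star_algebra
begin

lemma star_one [simp]: "st one = one"
  using star_mul[of "st one" one] by simp

lemma clinear_mul_left: "clinear (\<lambda>x. mul x y)"
  by (simp add: clinear_def mul_add_left mul_scale_left)

lemma clinear_mul_right: "clinear (\<lambda>y. mul x y)"
  by (simp add: clinear_def mul_add_right mul_scale_right)

lemma semilinear_star: "semilinear cnj st"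
  by (simp add: semilinear_def star_add star_scale)

lemma clinear_star_conj: "clinear f \<Longrightarrow> clinear (\<lambda>x. st (f (st x)))"
  by (simp add: clinear_def star_add star_scale)

lemma cfunctional_mul_right: "cfunctional \<phi> \<Longrightarrow> cfunctional (\<lambda>w. \<phi> (mul x w))"
  by (simp add: cfunctional_def mul_add_right mul_scale_right)

lemma tmult_tens: "tmult mul (tens a b) (tens c d) = tens (mul a c) (mul b d)"
proof -
  have "tmult mul (tens a b) (tens c d) = (\<Sum>p\<in>UNIV. (a$fst p * b$snd p) *s
     (\<lambda>x y. \<Sum>q\<in>UNIV. tens c d $ q *s tens (mul x (bas (fst q))) (mul y (bas (snd q))))
       (bas (fst p)) (bas (snd p)))"
    by (simp add: tmult_sum_left tens_def[of a b])
  also have "\<dots> = (\<Sum>q\<in>UNIV. (c$fst q * d$snd q) *s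
     (\<lambda>x y. tens (mul a x) (mul b y)) (bas (fst q)) (bas (snd q)))"
    by (subst bilinear_basis_expansion)
       (auto intro!: clinear_sum_scaled clinear_compose[OF clinear_tens_left clinear_mul_left]
         clinear_compose[OF clinear_tens_right clinear_mul_left] simp: tens_def[of c d])
  also have "\<dots> = tens (mul a c) (mul b d)"
    by (rule bilinear_basis_expansion)
       (auto intro!: clinear_compose[OF clinear_tens_left clinear_mul_right]
         clinear_compose[OF clinear_tens_right clinear_mul_right])
  finally show ?thesis .
qed

lemma tmult3_tens:
  "tmult3 mul (tens12 a (tens b c)) (tens12 a' (tens b' c'))
    = tens12 (mul a a') (tens (mul b b') (mul c c'))"
proof -
  have "tmult3 mul (tens12 a (tens b c)) (tens12 a' (tens b' c'))
      = (\<Sum>p\<in>UNIV. (a$fst p * b$fst (snd p) * c$snd (snd p)) *s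
          (\<lambda>x y z. \<Sum>q\<in>UNIV. tens12 a' (tens b' c') $ q *s tens12 (mul x (bas (fst q)))
             (tens (mul y (bas (fst (snd q)))) (mul z (bas (snd (snd q))))))
          (bas (fst p)) (bas (fst (snd p))) (bas (snd (snd p))))"
    by (simp add: tmult3_sum_left tens12_tens_nth[of a b c])
  also have "\<dots> = (\<Sum>q\<in>UNIV. (a'$fst q * b'$fst (snd q) * c'$snd (snd q)) *s
          (\<lambda>x y z. tens12 (mul a x) (tens (mul b y) (mul c z)))
          (bas (fst q)) (bas (fst (snd q))) (bas (snd (snd q))))"
    by (subst trilinear_basis_expansion)
       (auto intro!: clinear_sum_scaled clinear_compose[OF clinear_tens12_left clinear_mul_left]
         clinear_compose[OF clinear_tens12_right clinear_compose[OF clinear_tens_left clinear_mul_left]]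
         clinear_compose[OF clinear_tens12_right clinear_compose[OF clinear_tens_right clinear_mul_left]]
         simp: tens12_tens_nth)
  also have "\<dots> = tens12 (mul a a') (tens (mul b b') (mul c c'))"
    by (rule trilinear_basis_expansion)
       (auto intro!: clinear_compose[OF clinear_tens12_left clinear_mul_right]
         clinear_compose[OF clinear_tens12_right clinear_compose[OF clinear_tens_left clinear_mul_right]]
         clinear_compose[OF clinear_tens12_right clinear_compose[OF clinear_tens_right clinear_mul_right]])
  finally show ?thesis .
qed

lemmas tstar_tens_star = tstar_tens[OF semilinear_star]

lemma tstar_tstar: "tstar st (tstar st T) = T"
  by (rule semilinear_eq_on_tens[of "\<lambda>c. c"])
     (simp_all add: tstar_tens_star semilinear_compose[OF semilinear_tstar semilinear_tstar, simplified]
       clinear_id[unfolded clinear_iff_semilinear id_def])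

lemma tstar_tmult: "tstar st (tmult mul T U) = tmult mul (tstar st U) (tstar st T)"
proof -
  have "tstar st (tmult mul (tens a b) U) = tmult mul (tstar st U) (tstar st (tens a b))" for a b
    by (rule semilinear_eq_on_tens[OF
          semilinear_compose_clinear_right[OF semilinear_tstar clinear_tmult_right]
          semilinear_compose_clinear_left[OF clinear_tmult_left semilinear_tstar]])
       (simp add: tmult_tens tstar_tens_star star_mul)
  then show ?thesis
    by (rule semilinear_eq_on_tens[OF
          semilinear_compose_clinear_right[OF semilinear_tstar clinear_tmult_left]
          semilinear_compose_clinear_left[OF clinear_tmult_right semilinear_tstar]])
qed

lemma tstar_tmap:
  assumes "clinear f" "clinear g"
  shows "tstar st (tmap f g T) = tmap (\<lambda>x. st (f (st x))) (\<lambda>x. st (g (st x))) (tstar st T)"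
  by (rule semilinear_eq_on_tens[OF semilinear_compose_clinear_right[OF semilinear_tstar clinear_tmap]
        semilinear_compose_clinear_left[OF clinear_tmap semilinear_tstar]])
     (simp add: tmap_tens assms clinear_star_conj tstar_tens_star)

lemma id_fun_tstar:
  assumes "cfunctional \<phi>" "\<And>x. \<phi> (st x) = cnj (\<phi> x)"
  shows "id_fun \<phi> (tstar st T) = st (id_fun \<phi> T)"
  by (rule semilinear_eq_on_tens[OF semilinear_compose_clinear_left[OF clinear_id_fun semilinear_tstar]
        semilinear_compose_clinear_right[OF semilinear_star clinear_id_fun]])
     (simp add: id_fun_tens assms tstar_tens_star star_scale)

lemma tmult_tens_one_right: "tmult mul T (tens one y) = tmap id (\<lambda>z. mul z y) T"
  by (rule clinear_eq_on_tens[OF clinear_tmult_left clinear_tmap])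
     (simp add: tmult_tens tmap_tens clinear_id clinear_mul_left)

lemma id_fun_tmult_tens_one_left:
  assumes "cfunctional \<phi>"
  shows "id_fun \<phi> (tmult mul (tens x one) U) = mul x (id_fun \<phi> U)"
  by (rule clinear_eq_on_tens[OF clinear_compose[OF clinear_id_fun clinear_tmult_right]
        clinear_compose[OF clinear_mul_right clinear_id_fun]])
     (simp add: tmult_tens id_fun_tens assms mul_scale_right)

lemma fun_id_tmult_tens_one_left:
  assumes "cfunctional \<phi>"
  shows "fun_id \<phi> (tmult mul (tens x one) U) = fun_id (\<lambda>w. \<phi> (mul x w)) U"
  by (rule clinear_eq_on_tens[OF clinear_compose[OF clinear_fun_id clinear_tmult_right] clinear_fun_id])
     (simp add: tmult_tens fun_id_tens assms cfunctional_mul_right)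

lemma fun_id_tmult_tens_one_right:
  assumes "cfunctional \<phi>"
  shows "fun_id \<phi> (tmult mul T (tens one y)) = mul (fun_id \<phi> T) y"
  by (rule clinear_eq_on_tens[OF clinear_compose[OF clinear_fun_id clinear_tmult_left]
        clinear_compose[OF clinear_mul_left clinear_fun_id]])
     (simp add: tmult_tens fun_id_tens assms mul_scale_left)

lemma clinear_id_fun_id_tmult3_left: "clinear (\<lambda>T. id_fun_id \<phi> (tmult3 mul (tens21 T one) U))"
  by (rule clinear_compose[OF clinear_id_fun_id clinear_compose[OF clinear_tmult3_left clinear_tens21_left]])

lemma clinear_id_fun_id_tmult3_right: "clinear (\<lambda>U. id_fun_id \<phi> (tmult3 mul T (tens12 one U)))"
  by (rule clinear_compose[OF clinear_id_fun_id clinear_compose[OF clinear_tmult3_right clinear_tens12_right]])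

lemma id_fun_id_tmult3_tens:
  assumes "cfunctional \<phi>"
  shows "id_fun_id \<phi> (tmult3 mul (tens21 (tens a b) one) (tens12 one (tens c d)))
       = \<phi> (mul b c) *s tens a d"
  by (simp add: tens21_tens tmult3_tens id_fun_id_tens assms)

lemma id_fun_id_tmult3_eq_tmap_right:
  assumes "cfunctional \<phi>"
  shows "id_fun_id \<phi> (tmult3 mul (tens21 T one) (tens12 one U))
       = tmap id (\<lambda>z. fun_id \<phi> (tmult mul (tens z one) U)) T"
proof (rule clinear_eq_on_tens[OF clinear_id_fun_id_tmult3_left clinear_tmap])
  fix a b
  have "id_fun_id \<phi> (tmult3 mul (tens21 (tens a b) one) (tens12 one U))
      = tens a (fun_id \<phi> (tmult mul (tens b one) U))"
    by (rule clinear_eq_on_tens[OF clinear_id_fun_id_tmult3_right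
          clinear_compose[OF clinear_tens_right clinear_compose[OF clinear_fun_id clinear_tmult_right]]])
       (simp add: id_fun_id_tmult3_tens assms tmult_tens fun_id_tens tens_scale_right)
  then show "id_fun_id \<phi> (tmult3 mul (tens21 (tens a b) one) (tens12 one U))
      = tmap id (\<lambda>z. fun_id \<phi> (tmult mul (tens z one) U)) (tens a b)"
    by (simp add: tmap_tens clinear_id
        clinear_compose[OF clinear_fun_id clinear_compose[OF clinear_tmult_left clinear_tens_left]])
qed

lemma id_fun_id_tmult3_eq_tmap_left:
  assumes "cfunctional \<phi>"
  shows "id_fun_id \<phi> (tmult3 mul (tens21 T one) (tens12 one U))
       = tmap (\<lambda>z. id_fun \<phi> (tmult mul T (tens one z))) id U"
proof (rule clinear_eq_on_tens[OF clinear_id_fun_id_tmult3_right clinear_tmap])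
  fix c d
  have "id_fun_id \<phi> (tmult3 mul (tens21 T one) (tens12 one (tens c d)))
      = tens (id_fun \<phi> (tmult mul T (tens one c))) d"
    by (rule clinear_eq_on_tens[OF clinear_id_fun_id_tmult3_left
          clinear_compose[OF clinear_tens_left clinear_compose[OF clinear_id_fun clinear_tmult_left]]])
       (simp add: id_fun_id_tmult3_tens assms tmult_tens id_fun_tens tens_scale_left)
  then show "id_fun_id \<phi> (tmult3 mul (tens21 T one) (tens12 one (tens c d)))
      = tmap (\<lambda>z. id_fun \<phi> (tmult mul T (tens one z))) id (tens c d)"
    by (simp add: tmap_tens clinear_id
        clinear_compose[OF clinear_id_fun clinear_compose[OF clinear_tmult_right clinear_tens_right]])
qed

end

section \<open>The counit conditions\<close>

locale star_right_counit = unital_star_algebra mul one st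
  for mul :: "'i::finite alg \<Rightarrow> 'i alg \<Rightarrow> 'i alg" and one st +
  fixes \<Delta> :: "'i alg \<Rightarrow> 'i alg2" and \<epsilon> :: "'i alg \<Rightarrow> complex"
  assumes comult_star: "\<Delta> (st x) = tstar st (\<Delta> x)"
    and cfunctional_counit: "cfunctional \<epsilon>"
    and counit_right: "id_fun \<epsilon> (\<Delta> x) = x"
    and counit_star: "\<epsilon> (st x) = cnj (\<epsilon> x)"
begin

definition slice_e_mult_right :: "'i alg \<Rightarrow> 'i alg" where
  "slice_e_mult_right y = id_fun \<epsilon> (tmult mul (\<Delta> one) (tens one y))"

definition slice_e_mult_left :: "'i alg \<Rightarrow> 'i alg" where
  "slice_e_mult_left y = id_fun \<epsilon> (tmult mul (tens one y) (\<Delta> one))"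

lemma clinear_slice_e_mult_left: "clinear slice_e_mult_left"
  unfolding slice_e_mult_left_def
  by (rule clinear_compose[OF clinear_id_fun clinear_compose[OF clinear_tmult_left clinear_tens_right]])

lemma tstar_comult_one: "tstar st (\<Delta> one) = \<Delta> one"
  using comult_star[of one] by simp

lemma star_conj_slice_e_mult_left: "st (slice_e_mult_left (st y)) = slice_e_mult_right y"
  unfolding slice_e_mult_left_def slice_e_mult_right_def
  by (simp add: id_fun_tstar[OF cfunctional_counit counit_star, symmetric] tstar_tmult
      tstar_tens_star tstar_comult_one)

lemma tstar_tmap_comult:
  assumes "clinear f"
  shows "tstar st (tmap f id (\<Delta> (st x))) = tmap (\<lambda>y. st (f (st y))) id (\<Delta> x)"
  using tstar_tmap[OF assms clinear_id, of "\<Delta> (st x)"] by (simp add: comult_star tstar_tstar id_def)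

lemma tmap_comult_eq_iff_star_conj:
  assumes "clinear f"
  shows "(\<forall>x. tmap f id (\<Delta> x) = tmult mul (tens one x) (\<Delta> one))
     \<longleftrightarrow> (\<forall>x. tmap (\<lambda>y. st (f (st y))) id (\<Delta> x) = tmult mul (\<Delta> one) (tens one x))"
proof -
  have conj: "tmap (\<lambda>y. st (g (st y))) id (\<Delta> x) = tstar st U"
    if "clinear g" "tmap g id (\<Delta> (st x)) = U" for g x U
    using tstar_tmap_comult[OF that(1), of x] that(2) by simp
  show ?thesis
  proof (intro iffI allI)
    fix x
    assume "\<forall>x. tmap f id (\<Delta> x) = tmult mul (tens one x) (\<Delta> one)"
    then show "tmap (\<lambda>y. st (f (st y))) id (\<Delta> x) = tmult mul (\<Delta> one) (tens one x)"
      using conj[OF assms] by (simp add: tstar_tmult tstar_tens_star tstar_comult_one)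
  next
    fix x
    assume "\<forall>x. tmap (\<lambda>y. st (f (st y))) id (\<Delta> x) = tmult mul (\<Delta> one) (tens one x)"
    then show "tmap f id (\<Delta> x) = tmult mul (tens one x) (\<Delta> one)"
      using conj[OF clinear_star_conj[OF assms]] by (simp add: tstar_tmult tstar_tens_star tstar_comult_one)
  qed
qed

lemma id_fun_id_comult_one_eq_tmap:
  "id_fun_id \<epsilon> (tmult3 mul (tens21 (\<Delta> one) one) (tens12 one (\<Delta> x)))
     = tmap slice_e_mult_right id (\<Delta> x)"
  unfolding slice_e_mult_right_def
  by (rule id_fun_id_tmult3_eq_tmap_left[OF cfunctional_counit])

lemma eq_slice_e_mult_left_if_tmap_comult:
  assumes "clinear f" "tmap f id (\<Delta> x) = tmult mul (tens one x) (\<Delta> one)"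
  shows "f x = slice_e_mult_left x"
proof -
  have "f x = f (id_fun \<epsilon> (\<Delta> x))" by (simp add: counit_right)
  also have "\<dots> = id_fun \<epsilon> (tmap f id (\<Delta> x))"
    by (rule id_fun_tmap_left[OF cfunctional_counit assms(1), symmetric])
  finally show ?thesis
    by (simp add: assms(2) slice_e_mult_left_def)
qed

lemma counit_counit_condition_if_slice_condition:
  assumes "fun_id \<epsilon> (tmult mul (tmult mul (tens x one) (\<Delta> one)) (tens one y))
         = fun_id \<epsilon> (tmult mul (tens x one) (\<Delta> y))"
  shows "fun_fun \<epsilon> \<epsilon> (tmult mul (tmult mul (tens x one) (\<Delta> one)) (tens one y)) = \<epsilon> (mul x y)"
proof -
  have "fun_fun \<epsilon> \<epsilon> (tmult mul (tmult mul (tens x one) (\<Delta> one)) (tens one y))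
      = fun_fun \<epsilon> \<epsilon> (tmult mul (tens x one) (\<Delta> y))"
    by (simp add: fun_fun_eq_fun_id[OF cfunctional_counit] assms)
  also have "\<dots> = \<epsilon> (mul x y)"
    by (simp add: fun_fun_eq_id_fun[OF cfunctional_counit]
        id_fun_tmult_tens_one_left[OF cfunctional_counit] counit_right)
  finally show ?thesis .
qed

lemma slice_condition_if_counit_counit_condition:
  assumes counit_counit: "\<And>w. fun_fun \<epsilon> \<epsilon> (tmult mul (tmult mul (tens x one) (\<Delta> one)) (tens one w))
                             = \<epsilon> (mul x w)"
    and A3: "tmap slice_e_mult_right id (\<Delta> y) = tmult mul (\<Delta> one) (tens one y)"
  shows "fun_id \<epsilon> (tmult mul (tmult mul (tens x one) (\<Delta> one)) (tens one y))
       = fun_id \<epsilon> (tmult mul (tens x one) (\<Delta> y))"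
proof -
  define \<psi> where "\<psi> w = \<epsilon> (mul x w)" for w
  define P where "P = fun_id \<psi> (\<Delta> one)"
  define L where "L z = fun_id \<epsilon> (tmult mul (tens z one) (\<Delta> y))" for z
  have \<psi>: "cfunctional \<psi>"
    unfolding \<psi>_def by (rule cfunctional_mul_right[OF cfunctional_counit])
  have P_eq: "fun_id \<epsilon> (tmult mul (tens x one) (\<Delta> one)) = P"
    unfolding P_def \<psi>_def by (rule fun_id_tmult_tens_one_left[OF cfunctional_counit])
  have \<epsilon>_mul_P: "(\<lambda>w. \<epsilon> (mul P w)) = \<psi>"
  proof
    fix w
    have "\<epsilon> (mul P w) = fun_fun \<epsilon> \<epsilon> (tmult mul (tmult mul (tens x one) (\<Delta> one)) (tens one w))"
      by (simp add: P_eq[symmetric] fun_fun_eq_fun_id[OF cfunctional_counit]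
          fun_id_tmult_tens_one_right[OF cfunctional_counit])
    then show "\<epsilon> (mul P w) = \<psi> w"
      by (simp add: counit_counit \<psi>_def)
  qed
  have A3': "tmult mul (\<Delta> one) (tens one y) = tmap id L (\<Delta> one)"
    unfolding L_def
    by (simp add: A3[symmetric] id_fun_id_comult_one_eq_tmap[symmetric]
        id_fun_id_tmult3_eq_tmap_right[OF cfunctional_counit])
  have L: "clinear L"
    unfolding L_def
    by (rule clinear_compose[OF clinear_fun_id clinear_compose[OF clinear_tmult_left clinear_tens_left]])
  have "fun_id \<epsilon> (tmult mul (tmult mul (tens x one) (\<Delta> one)) (tens one y)) = mul P y"
    by (simp add: fun_id_tmult_tens_one_right[OF cfunctional_counit] P_eq)
  also have "\<dots> = fun_id \<psi> (tmult mul (\<Delta> one) (tens one y))"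
    by (simp add: P_def tmult_tens_one_right fun_id_tmap_right[OF \<psi> clinear_mul_left])
  also have "\<dots> = L P"
    by (simp add: A3' fun_id_tmap_right[OF \<psi> L] P_def)
  also have "\<dots> = fun_id \<psi> (\<Delta> y)"
    by (simp add: L_def fun_id_tmult_tens_one_left[OF cfunctional_counit] \<epsilon>_mul_P)
  also have "\<dots> = fun_id \<epsilon> (tmult mul (tens x one) (\<Delta> y))"
    by (simp add: \<psi>_def[abs_def] fun_id_tmult_tens_one_left[OF cfunctional_counit])
  finally show ?thesis .
qed

lemma counit_conditions_iff:
  assumes "clinear f"
  shows "((\<forall>x y. fun_fun \<epsilon> \<epsilon> (tmult mul (tmult mul (tens x one) (\<Delta> one)) (tens one y)) = \<epsilon> (mul x y)) \<and>
          (\<forall>x. tmap f id (\<Delta> x) = tmult mul (tens one x) (\<Delta> one)))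
     \<longleftrightarrow> ((\<forall>x y. fun_id \<epsilon> (tmult mul (tmult mul (tens x one) (\<Delta> one)) (tens one y))
                   = fun_id \<epsilon> (tmult mul (tens x one) (\<Delta> y))) \<and>
          (\<forall>x. id_fun_id \<epsilon> (tmult3 mul (tens21 (\<Delta> one) one) (tens12 one (\<Delta> x)))
                   = tmult mul (\<Delta> one) (tens one x)) \<and>
          (\<forall>x. f x = slice_e_mult_left x))"
    (is "(?C2 \<and> ?C3 f) \<longleftrightarrow> (?A2 \<and> ?A3 \<and> ?A4)")
proof -
  have C3_iff_A3: "?C3 slice_e_mult_left \<longleftrightarrow> ?A3"
    using tmap_comult_eq_iff_star_conj[OF clinear_slice_e_mult_left]
    by (simp add: star_conj_slice_e_mult_left id_fun_id_comult_one_eq_tmap id_def)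
  show ?thesis
  proof
    assume I: "?C2 \<and> ?C3 f"
    then have A4: "f = slice_e_mult_left"
      using eq_slice_e_mult_left_if_tmap_comult[OF assms] by blast
    with I C3_iff_A3 have ?A3 by simp
    with I show "?A2 \<and> ?A3 \<and> ?A4"
      using A4 slice_condition_if_counit_counit_condition by (simp add: id_fun_id_comult_one_eq_tmap)
  next
    assume II: "?A2 \<and> ?A3 \<and> ?A4"
    then have "f = slice_e_mult_left" by blast
    with II C3_iff_A3 show "?C2 \<and> ?C3 f"
      using counit_counit_condition_if_slice_condition by simp
  qed
qed

end

theorem proposition2p1p2:
  fixes mul :: "'i::finite alg \<Rightarrow> 'i alg \<Rightarrow> 'i alg"
    and one :: "'i alg"
    and st :: "'i alg \<Rightarrow> 'i alg"
    and \<Delta> :: "'i alg \<Rightarrow> 'i alg2"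
    and S :: "'i alg \<Rightarrow> 'i alg"
    and \<epsilon> :: "'i alg \<Rightarrow> complex"
  assumes M: "fd_cstar mul one st"
    and D_lin: "clinear \<Delta>"
    and D_inj: "inj \<Delta>"
    and D_mult: "\<And>x y. \<Delta> (mul x y) = tmult mul (\<Delta> x) (\<Delta> y)"
    and D_star: "\<And>x. \<Delta> (st x) = tstar st (\<Delta> x)"
    and D_coass: "\<And>x. map_id \<Delta> (\<Delta> x) = id_map \<Delta> (\<Delta> x)"
    and S_lin: "clinear S"
    and S_unit: "S one = one"
    and S_anti: "\<And>x y. S (mul x y) = mul (S y) (S x)"
    and S_star: "\<And>x. S (st x) = st (S x)"
    and S_bij: "bij S"
    and S_inv: "\<And>x. S (S x) = x"
    and S_D: "\<And>x. tmap S S (\<Delta> x) = tflip (\<Delta> (S x))"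
    and eps_lin: "cfunctional \<epsilon>"
    and eps_counit1: "\<And>x. fun_id \<epsilon> (\<Delta> x) = x"
    and eps_counit2: "\<And>x. id_fun \<epsilon> (\<Delta> x) = x"
    and eps_S: "\<And>x. \<epsilon> (S x) = \<epsilon> x"
    and eps_star: "\<And>x. \<epsilon> (st x) = cnj (\<epsilon> x)"
  defines "e \<equiv> \<Delta> one"
    and "\<epsilon>s \<equiv> (\<lambda>x. tmu mul (tmap S id (\<Delta> x)))"
  shows "((\<forall>x y. fun_fun \<epsilon> \<epsilon> (tmult mul (tmult mul (tens x one) e) (tens one y))
                   = \<epsilon> (mul x y)) \<and>
          (\<forall>x. tmap \<epsilon>s id (\<Delta> x) = tmult mul (tens one x) e))
     \<longleftrightarrow>
         ((\<forall>x y. fun_id \<epsilon> (tmult mul (tmult mul (tens x one) e) (tens one y))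
                   = fun_id \<epsilon> (tmult mul (tens x one) (\<Delta> y))) \<and>
          (\<forall>x. id_fun_id \<epsilon> (tmult3 mul (tens21 e one) (tens12 one (\<Delta> x)))
                   = tmult mul e (tens one x)) \<and>
          (\<forall>x. \<epsilon>s x = id_fun \<epsilon> (tmult mul (tens one x) e)))"
proof -
  interpret star_right_counit mul one st \<Delta> \<epsilon>
    by (intro star_right_counit.intro fd_cstar_unital_star_algebra[OF M]
        star_right_counit_axioms.intro D_lin D_star eps_lin eps_counit2 eps_star)
  have "clinear \<epsilon>s"
    unfolding \<epsilon>s_def by (rule clinear_compose[OF clinear_tmu clinear_compose[OF clinear_tmap D_lin]])
  from counit_conditions_iff[OF this] show ?thesis
    unfolding e_def slice_e_mult_left_def .
qed

end
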